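(* Let $n\ge2$, let $f$ be a $\gamma_{tr3}(P_2\square P_n)$-function such that the number of vertices $v$ with $f(v)=\emptyset$ is minimum among all $\gamma_{tr3}(P_2\square P_n)$-functions, and let $a_j=|f((0,j))|+|f((1,j))|$ for $j\in\{0,\dots,n-1\}$. Then $a_j\ge2$ for every $j\in\{0,1,\dots,n-1\}$.
   Context: $P_m$ denotes the directed path with vertex set $\{0,1,\dots,m-1\}$ and arcs $(i,i+1)$ for $0\le i\le m-2$. The Cartesian product $D_1\square D_2$ has vertex set $V(D_1)\times V(D_2)$, with an arc from $(x_1,y_1)$ to $(x_2,y_2)$ iff either $(x_1,x_2)$ is an arc of $D_1$ and $y_1=y_2$, or $x_1=x_2$ and $(y_1,y_2)$ is an arc of $D_2$. For a digraph $D$ and positive integer $k$, a $k$-rainbow dominating function on $D$ is $f:V(D)\to\mathcal P(\{1,\dots,k\})$ such that every $v$ with $f(v)=\emptyset$ satisfies $\bigcup_{u\in N^-(v)}f(u)=\{1,\dots,k\}$, where $N^-(v)$ is the set of in-neighbors of $v$; its weight is $\sum_v|f(v)|$. It is total if additionally the subdigraph induced by $\{v:f(v)\ne\emptyset\}$ has no isolated vertex (a vertex with neither in- nor out-neighbors in it). $\gamma_{trk}(D)$ is the minimum weight of a total $k$-rainbow dominating function, and a $\gamma_{trk}(D)$-function is one attaining it. *)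

theory Defs
  imports Main
begin

text \<open>A digraph is given by a vertex set V and an arc predicate A (A u v: arc from u to v).\<close>

definition path_V :: "nat \<Rightarrow> nat set" where
  "path_V m = {..<m}"

definition path_A :: "nat \<Rightarrow> nat \<Rightarrow> nat \<Rightarrow> bool" where
  "path_A m i j \<longleftrightarrow> i < m \<and> j < m \<and> j = i + 1"

definition cart_V :: "'a set \<Rightarrow> 'b set \<Rightarrow> ('a \<times> 'b) set" where
  "cart_V V1 V2 = V1 \<times> V2"

definition cart_A :: "('a \<Rightarrow> 'a \<Rightarrow> bool) \<Rightarrow> ('b \<Rightarrow> 'b \<Rightarrow> bool)
    \<Rightarrow> ('a \<times> 'b) \<Rightarrow> ('a \<times> 'b) \<Rightarrow> bool" where
  "cart_A A1 A2 p q \<longleftrightarrow>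
     (A1 (fst p) (fst q) \<and> snd p = snd q) \<or> (fst p = fst q \<and> A2 (snd p) (snd q))"

definition in_nbrs :: "'a set \<Rightarrow> ('a \<Rightarrow> 'a \<Rightarrow> bool) \<Rightarrow> 'a \<Rightarrow> 'a set" where
  "in_nbrs V A v = {u \<in> V. A u v}"

definition rainbow_dom :: "'a set \<Rightarrow> ('a \<Rightarrow> 'a \<Rightarrow> bool) \<Rightarrow> nat \<Rightarrow> ('a \<Rightarrow> nat set) \<Rightarrow> bool" where
  "rainbow_dom V A k f \<longleftrightarrow>
     (\<forall>v\<in>V. f v \<subseteq> {1..k}) \<and>
     (\<forall>v\<in>V. f v = {} \<longrightarrow> (\<Union>u\<in>in_nbrs V A v. f u) = {1..k})"

definition total_rainbow_dom :: "'a set \<Rightarrow> ('a \<Rightarrow> 'a \<Rightarrow> bool) \<Rightarrow> nat \<Rightarrow> ('a \<Rightarrow> nat set) \<Rightarrow> bool" where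
  "total_rainbow_dom V A k f \<longleftrightarrow> rainbow_dom V A k f \<and>
     (\<forall>v\<in>V. f v \<noteq> {} \<longrightarrow> (\<exists>u\<in>V. u \<noteq> v \<and> f u \<noteq> {} \<and> (A u v \<or> A v u)))"

definition rd_weight :: "'a set \<Rightarrow> ('a \<Rightarrow> nat set) \<Rightarrow> nat" where
  "rd_weight V f = (\<Sum>v\<in>V. card (f v))"

definition gamma_tr :: "'a set \<Rightarrow> ('a \<Rightarrow> 'a \<Rightarrow> bool) \<Rightarrow> nat \<Rightarrow> nat" where
  "gamma_tr V A k = (LEAST w. \<exists>f. total_rainbow_dom V A k f \<and> rd_weight V f = w)"

definition gamma_tr_function :: "'a set \<Rightarrow> ('a \<Rightarrow> 'a \<Rightarrow> bool) \<Rightarrow> nat \<Rightarrow> ('a \<Rightarrow> nat set) \<Rightarrow> bool" where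
  "gamma_tr_function V A k f \<longleftrightarrow>
     total_rainbow_dom V A k f \<and> rd_weight V f = gamma_tr V A k"

end

theory Submission
  imports Defs
begin

text \<open>The constant labelling with \<open>{1}\<close> is a total 3-rainbow dominating function of weight \<open>2n\<close>
on the ladder \<open>P\<^sub>2 \<box> P\<^sub>n\<close>, and a discharging argument shows that every 3-rainbow
dominating function has weight at least \<open>2n\<close>. Hence the constant labelling is a
\<open>\<gamma>\<^sub>t\<^sub>r\<^sub>3\<close>-function without empty vertices, so a \<open>\<gamma>\<^sub>t\<^sub>r\<^sub>3\<close>-function with the fewest empty
vertices has none, and each column carries weight at least 2.\<close>

lemma rainbow_dom_label_subset:
  "rainbow_dom V A k f \<Longrightarrow> v \<in> V \<Longrightarrow> f v \<subseteq> {1..k}"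
  unfolding rainbow_dom_def by blast

lemma rainbow_dom_finite_label:
  "rainbow_dom V A k f \<Longrightarrow> v \<in> V \<Longrightarrow> finite (f v)"
  by (rule finite_subset [OF rainbow_dom_label_subset]) simp_all

lemma rainbow_dom_in_nbrs_weight:
  assumes "rainbow_dom V A k f" "finite V" "v \<in> V" "f v = {}"
  shows "k \<le> (\<Sum>u\<in>in_nbrs V A v. card (f u))"
proof -
  have "(\<Union>u\<in>in_nbrs V A v. f u) = {1..k}"
    using assms(1,3,4) unfolding rainbow_dom_def by blast
  then have "k = card (\<Union>u\<in>in_nbrs V A v. f u)" by simp
  also have "\<dots> \<le> (\<Sum>u\<in>in_nbrs V A v. card (f u))"
    using assms(2) by (intro card_UN_le) (simp add: in_nbrs_def)
  finally show ?thesis .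
qed

lemma total_rainbow_dom_const_singleton:
  assumes "1 \<le> k" and "\<And>v. v \<in> V \<Longrightarrow> \<exists>u\<in>V. u \<noteq> v \<and> (A u v \<or> A v u)"
  shows "total_rainbow_dom V A k (\<lambda>_. {1})"
  using assms unfolding total_rainbow_dom_def rainbow_dom_def by auto

lemma rd_weight_const_singleton: "rd_weight V (\<lambda>_. {1}) = card V"
  unfolding rd_weight_def by simp

lemma gamma_tr_functionI:
  assumes "total_rainbow_dom V A k g"
    and "\<And>h. total_rainbow_dom V A k h \<Longrightarrow> rd_weight V g \<le> rd_weight V h"
  shows "gamma_tr_function V A k g"
proof -
  have "gamma_tr V A k = rd_weight V g"
    unfolding gamma_tr_def using assms by (intro Least_equality) auto
  then show ?thesis
    using assms(1) unfolding gamma_tr_function_def by simp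
qed

lemma sum_ge_by_discharging:
  fixes a h :: "nat \<Rightarrow> nat"
  assumes "\<And>j. j < n \<Longrightarrow> c + h (Suc j) \<le> a j + h j"
  shows "c * n + h n \<le> (\<Sum>j<n. a j) + h 0"
  using assms
proof (induction n)
  case (Suc n)
  then have "c * n + h n \<le> (\<Sum>j<n. a j) + h 0" by simp
  moreover have "c + h (Suc n) \<le> a n + h n" using Suc.prems by simp
  ultimately show ?case by simp
qed simp

abbreviation ladder_V :: "nat \<Rightarrow> (nat \<times> nat) set" where
  "ladder_V n \<equiv> cart_V (path_V 2) (path_V n)"

abbreviation ladder_A :: "nat \<Rightarrow> nat \<times> nat \<Rightarrow> nat \<times> nat \<Rightarrow> bool" where
  "ladder_A n \<equiv> cart_A (path_A 2) (path_A n)"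

lemma mem_ladder_V [simp]: "(i, j) \<in> ladder_V n \<longleftrightarrow> i < 2 \<and> j < n"
  unfolding cart_V_def path_V_def by auto

lemma finite_ladder_V: "finite (ladder_V n)"
  unfolding cart_V_def path_V_def by simp

lemma card_ladder_V: "card (ladder_V n) = 2 * n"
  unfolding cart_V_def path_V_def by simp

lemma in_nbrs_ladder_top:
  "j < n \<Longrightarrow> in_nbrs (ladder_V n) (ladder_A n) (0, j) = (if j = 0 then {} else {(0, j - 1)})"
  unfolding in_nbrs_def cart_V_def cart_A_def path_V_def path_A_def by auto

lemma in_nbrs_ladder_bottom:
  "j < n \<Longrightarrow> in_nbrs (ladder_V n) (ladder_A n) (1, j) =
     (if j = 0 then {(0, 0)} else {(0, j), (1, j - 1)})"
  unfolding in_nbrs_def cart_V_def cart_A_def path_V_def path_A_def by auto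

lemma ladder_rung_adjacent:
  "v \<in> ladder_V n \<Longrightarrow> \<exists>u\<in>ladder_V n. u \<noteq> v \<and> (ladder_A n u v \<or> ladder_A n v u)"
  by (cases v, rule bexI[of _ "(1 - fst v, snd v)"])
     (auto simp: cart_A_def path_A_def less_2_cases_iff)

lemma rd_weight_ladder:
  "rd_weight (ladder_V n) g = (\<Sum>j<n. card (g (0, j)) + card (g (1, j)))"
proof -
  have "ladder_V n = {0, 1} \<times> {..<n}" unfolding cart_V_def path_V_def by auto
  then have "rd_weight (ladder_V n) g = (\<Sum>i\<in>{0::nat, 1}. \<Sum>j<n. card (g (i, j)))"
    unfolding rd_weight_def by (simp add: sum.cartesian_product split_def)
  then show ?thesis by (simp add: sum.distrib)
qed

text \<open>The charge that column \<open>j\<close> receives from column \<open>j - 1\<close>: one unit for each empty vertex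
of column \<open>j\<close>, except an empty bottom vertex whose left neighbour has weight at most 1;
that vertex is paid for by the top vertex of its own column instead.\<close>

definition ladder_charge :: "nat \<Rightarrow> (nat \<times> nat \<Rightarrow> nat set) \<Rightarrow> nat \<Rightarrow> nat" where
  "ladder_charge n f j =
     (if 0 < j \<and> j < n
      then of_bool (f (0, j) = {}) + of_bool (f (1, j) = {} \<and> 2 \<le> card (f (1, j - 1)))
      else 0)"

lemma ladder_column_balance:
  assumes f: "rainbow_dom (ladder_V n) (ladder_A n) 3 f" and j: "j < n"
  shows "2 + ladder_charge n f (Suc j) \<le> card (f (0, j)) + card (f (1, j)) + ladder_charge n f j"
proof -
  note dom = rainbow_dom_in_nbrs_weight [OF f finite_ladder_V]
  have card_le: "card (f (i, j)) \<le> 3" if "i < 2" for i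
    using card_mono [OF _ rainbow_dom_label_subset [OF f]] that j by fastforce
  have empty_iff: "f (i, j) = {} \<longleftrightarrow> card (f (i, j)) = 0" if "i < 2" for i
    using rainbow_dom_finite_label [OF f] that j by auto
  have top_next_empty: "card (f (0, j)) \<ge> 3" if "Suc j < n" "f (0, Suc j) = {}"
    using dom [of "(0, Suc j)"] that by (simp add: in_nbrs_ladder_top)
  have top_empty: "j \<noteq> 0 \<and> card (f (0, j - 1)) \<ge> 3" if "f (0, j) = {}"
    using dom [of "(0, j)"] that j by (simp add: in_nbrs_ladder_top split: if_splits)
  have bottom_empty:
    "3 \<le> card (f (0, j)) + (if j = 0 then 0 else card (f (1, j - 1)))" if "f (1, j) = {}"
    using dom [of "(1, j)", unfolded in_nbrs_ladder_bottom [OF j]] that j by (cases "j = 0") auto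
  show ?thesis
    unfolding ladder_charge_def
    using card_le [of 0] card_le [of 1] empty_iff [of 0] empty_iff [of 1]
      top_next_empty top_empty bottom_empty j
    by (cases "j = 0"; auto split: if_splits)
qed

lemma rainbow_dom_ladder_weight_ge:
  assumes "rainbow_dom (ladder_V n) (ladder_A n) 3 f"
  shows "2 * n \<le> rd_weight (ladder_V n) f"
proof -
  have "2 * n + ladder_charge n f n \<le> rd_weight (ladder_V n) f + ladder_charge n f 0"
    unfolding rd_weight_ladder
    by (rule sum_ge_by_discharging) (use ladder_column_balance [OF assms] in simp)
  then show ?thesis by (simp add: ladder_charge_def)
qed

lemma gamma_tr_function_ladder_const_singleton:
  "gamma_tr_function (ladder_V n) (ladder_A n) 3 (\<lambda>_. {1})"
proof (rule gamma_tr_functionI)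
  show "total_rainbow_dom (ladder_V n) (ladder_A n) 3 (\<lambda>_. {1})"
    by (rule total_rainbow_dom_const_singleton) (simp_all add: ladder_rung_adjacent)
  fix h assume "total_rainbow_dom (ladder_V n) (ladder_A n) 3 h"
  then show "rd_weight (ladder_V n) (\<lambda>_. {1}) \<le> rd_weight (ladder_V n) h"
    unfolding total_rainbow_dom_def rd_weight_const_singleton card_ladder_V
    using rainbow_dom_ladder_weight_ge by blast
qed

theorem lemma4p4:
  fixes n :: nat and f :: "nat \<times> nat \<Rightarrow> nat set"
  defines "V \<equiv> cart_V (path_V 2) (path_V n)"
      and "A \<equiv> cart_A (path_A 2) (path_A n)"
  assumes "n \<ge> 2"
      and "gamma_tr_function V A 3 f"
      and "\<And>g. gamma_tr_function V A 3 g \<Longrightarrow>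
              card {v \<in> V. f v = {}} \<le> card {v \<in> V. g v = {}}"
  shows "\<forall>j < n. card (f (0, j)) + card (f (1, j)) \<ge> 2"
proof (intro allI impI)
  fix j assume j: "j < n"
  have "card {v \<in> V. f v = {}} = 0"
    using assms(5) [OF gamma_tr_function_ladder_const_singleton [of n, folded V_def A_def]]
    by simp
  then have "{v \<in> V. f v = {}} = {}"
    using finite_ladder_V [of n] unfolding V_def by simp
  then have nonempty: "f v \<noteq> {}" if "v \<in> V" for v
    using that by blast
  have dom: "rainbow_dom V A 3 f"
    using assms(4) unfolding gamma_tr_function_def total_rainbow_dom_def by simp
  have "1 \<le> card (f (i, j))" if "i < 2" for i
    using nonempty [of "(i, j)"] rainbow_dom_finite_label [OF dom, of "(i, j)"] that j
    unfolding V_def by (simp add: Suc_le_eq card_gt_0_iff)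
  from this [of 0] this [of 1] show "card (f (0, j)) + card (f (1, j)) \<ge> 2" by simp
qed

end
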